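(* Let $n,m,p\in\mathbb{N}$ with $m\ge p$, $A\in\mathbb{R}^{n\times n}$, $B\in\mathbb{R}^{n\times m}$, $C\in\mathbb{R}^{p\times n}$, and let $f:\mathbb{R}\times\mathbb{R}^n\times\mathbb{R}^m\to\mathbb{R}^n$ be continuous and bounded. Assume: (P1) $L\in\mathcal{C}^\infty(\mathbb{R}\to\mathbb{R}^{m\times m})$ is such that $L,\dot L,\ldots,L^{(n)}$ are bounded and there is $q\in\mathbb{N}$ with $\operatorname{rk} BL(t)=q\ge p$ for all $t\in\mathbb{R}$; (P2) there is $r\in\mathbb{N}$ such that $CA^kBL(t)=0$ for all $t\in\mathbb{R}$ and $CA^kf(t,x,u)=0$ for all $(t,x,u)\in\mathbb{R}\times\mathbb{R}^n\times\mathbb{R}^m$, for $k=0,\ldots,r-2$, and the matrix $\Gamma:=CA^{r-1}B\in\mathbb{R}^{p\times m}$ satisfies $\operatorname{rk}\Gamma L(t)=p$ for all $t\in\mathbb{R}$. Let $\mathcal{B}(t)$, $\mathcal{C}$, $\rho$, $V$, $\mathcal{N}(t)$ and $U(t)$ be defined as in the context. Then for all $t\in\mathbb{R}$ we have $\rho=\operatorname{rk}\mathcal{C}=\operatorname{rk}\mathcal{C}\mathcal{B}(t)=pr$, and, viewing $\mathcal{C}\mathcal{B}(t)\in\mathbb{R}^{rp\times rm}$ as an $r\times r$ block matrix with blocks $(\mathcal{C}\mathcal{B}(t))_{i,j}\in\mathbb{R}^{p\times m}$, $i,j=1,\ldots,r$, we have $(\mathcal{C}\mathcal{B}(t))_{i,j}=0$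 whenever $i+j\le r$ and $(\mathcal{C}\mathcal{B}(t))_{i,j}=(-1)^{j-1}\Gamma L(t)$ whenever $i+j=r+1$ (the blocks with $i+j>r+1$ are not specified). Furthermore, $U(t)$ is invertible for all $t\in\mathbb{R}$ with $$U(t)^{-1}=\big[\mathcal{B}(t)\big(\mathcal{C}\mathcal{B}(t)\big)^\dagger,\ V\big].$$
   Context: $M^\dagger$ denotes the Moore–Penrose pseudoinverse and $\operatorname{rk}$ the rank. For a matrix function $M$, $(\tfrac{d}{dt}-A)(M(t)):=\dot M(t)-AM(t)$, applied iteratively for powers. Define for $t\in\mathbb{R}$: $\mathcal{B}(t):=\big[BL(t),\ (\tfrac{d}{dt}-A)(BL(t)),\ \ldots,\ (\tfrac{d}{dt}-A)^{r-1}(BL(t))\big]\in\mathbb{R}^{n\times rm}$; $\mathcal{C}:=\big[C^\top,(CA)^\top,\ldots,(CA^{r-1})^\top\big]^\top\in\mathbb{R}^{rp\times n}$; $\rho:=\operatorname{rk}\mathcal{C}$; $V\in\mathbb{R}^{n\times(n-\rho)}$ any matrix with $\operatorname{im}V=\ker\mathcal{C}$; $\mathcal{N}(t):=V^\dagger\big[I_n-\mathcal{B}(t)(\mathcal{C}\mathcal{B}(t))^\dagger\mathcal{C}\big]\in\mathbb{R}^{(n-\rho)\times n}$; $U(t):=\begin{bmatrix}\mathcal{C}\\ \mathcal{N}(t)\end{bmatrix}\in\mathbb{R}^{(n-\rho+pr)\times n}$. *)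

theory Defs
  imports Complex_Main "HOL-Analysis.Derivative" "Jordan_Normal_Form.DL_Rank" "Jordan_Normal_Form.Matrix_Kernel"
begin

definition rk :: "real mat \<Rightarrow> nat" where
  "rk M = vec_space.rank (dim_row M) M"

definition pinv :: "real mat \<Rightarrow> real mat" where
  "pinv M = (THE X. X \<in> carrier_mat (dim_col M) (dim_row M) \<and>
      M * X * M = M \<and> X * M * X = X \<and>
      transpose_mat (M * X) = M * X \<and> transpose_mat (X * M) = X * M)"

definition mat_image :: "real mat \<Rightarrow> real vec set" where
  "mat_image M = {M *\<^sub>v x | x. x \<in> carrier_vec (dim_col M)}"

definition hcat :: "real mat \<Rightarrow> real mat \<Rightarrow> real mat" where
  "hcat X Y = four_block_mat X Y (0\<^sub>m 0 (dim_col X)) (0\<^sub>m 0 (dim_col Y))"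

definition vnorm :: "real vec \<Rightarrow> real" where
  "vnorm v = sqrt (\<Sum>i<dim_vec v. (v $ i)^2)"

definition mderiv :: "(real \<Rightarrow> real mat) \<Rightarrow> real \<Rightarrow> real mat" where
  "mderiv M t = mat (dim_row (M t)) (dim_col (M t)) (\<lambda>(i,j). Derivative.deriv (\<lambda>s. M s $$ (i,j)) t)"

definition dop :: "real mat \<Rightarrow> (real \<Rightarrow> real mat) \<Rightarrow> (real \<Rightarrow> real mat)" where
  "dop A M = (\<lambda>t. mderiv M t - A * M t)"

text \<open>calB(t) = [BL(t), (d/dt-A)(BL)(t), ..., (d/dt-A)^(r-1)(BL)(t)], an n x rm matrix.\<close>
definition calB :: "real mat \<Rightarrow> real mat \<Rightarrow> (real \<Rightarrow> real mat) \<Rightarrow> nat \<Rightarrow> real \<Rightarrow> real mat" where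
  "calB A B L r t = mat (dim_row B) (r * dim_col B)
     (\<lambda>(i,j). ((dop A ^^ (j div dim_col B)) (\<lambda>s. B * L s)) t $$ (i, j mod dim_col B))"

text \<open>calC = [C; CA; ...; CA^(r-1)], an rp x n matrix.\<close>
definition calC :: "real mat \<Rightarrow> real mat \<Rightarrow> nat \<Rightarrow> real mat" where
  "calC A C r = mat (r * dim_row C) (dim_col C)
     (\<lambda>(i,j). (C * (A ^\<^sub>m (i div dim_row C))) $$ (i mod dim_row C, j))"

definition calN :: "real mat \<Rightarrow> real mat \<Rightarrow> real mat \<Rightarrow> (real \<Rightarrow> real mat) \<Rightarrow> nat \<Rightarrow> real mat \<Rightarrow> real \<Rightarrow> real mat" where
  "calN A B C L r V t = pinv V * (1\<^sub>m (dim_row A) - calB A B L r t * pinv (calC A C r * calB A B L r t) * calC A C r)"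

definition calU :: "real mat \<Rightarrow> real mat \<Rightarrow> real mat \<Rightarrow> (real \<Rightarrow> real mat) \<Rightarrow> nat \<Rightarrow> real mat \<Rightarrow> real \<Rightarrow> real mat" where
  "calU A B C L r V t = calC A C r @\<^sub>r calN A B C L r V t"

end

theory Submission
  imports Defs
begin

text \<open>
  Write \<open>D\<^sub>j = (d/dt - A)\<^sup>j (B L)\<close>. Whenever \<open>k + j \<le> r - 2\<close> the product \<open>C A\<^sup>k D\<^sub>j\<close> vanishes
  identically, hence so does its derivative, which gives \<open>C A\<^sup>k D\<^sub>j\<^sub>+\<^sub>1 = - C A\<^sup>k\<^sup>+\<^sup>1 D\<^sub>j\<close>. By
  induction \<open>C A\<^sup>k D\<^sub>j\<close> is zero for \<open>k + j \<le> r - 2\<close> and equals \<open>(-1)\<^sup>j \<Gamma> L\<close> for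
  \<open>k + j = r - 1\<close>. So \<open>\<C> \<B>(t)\<close> is block anti-triangular with anti-diagonal blocks
  \<open>\<plusminus>\<Gamma> L(t)\<close> of full row rank, and back substitution shows that it maps onto \<open>\<real>\<^sup>p\<^sup>r\<close>; then
  so does \<open>\<C>\<close>, and both have rank \<open>p r\<close>.

  The pseudoinverse of a matrix with a right inverse is a right inverse, so
  \<open>X = \<B>(\<C>\<B>)\<^sup>\<dagger>\<close> satisfies \<open>\<C> X = I\<close>. Then \<open>[X, V]\<close> is onto, hence invertible, so \<open>V\<close> is
  injective and \<open>V\<^sup>\<dagger> V = I\<close>. Blockwise, \<open>U [X, V]\<close> has blocks \<open>\<C> X = I\<close>, \<open>\<C> V = 0\<close>,
  \<open>\<N> X = V\<^sup>\<dagger>(X - X \<C> X) = 0\<close> and \<open>\<N> V = V\<^sup>\<dagger>V = I\<close>.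
\<close>

section \<open>Moore--Penrose pseudoinverse\<close>

definition penrose :: "real mat \<Rightarrow> real mat \<Rightarrow> bool" where
  "penrose M X \<longleftrightarrow> M * X * M = M \<and> X * M * X = X \<and>
      transpose_mat (M * X) = M * X \<and> transpose_mat (X * M) = X * M"

lemma penrose_transpose:
  fixes M X :: "real mat"
  assumes M: "M \<in> carrier_mat a b" and X: "X \<in> carrier_mat b a" and pX: "penrose M X"
  shows "penrose (transpose_mat M) (transpose_mat X)"
proof -
  have MT: "transpose_mat M \<in> carrier_mat b a" and XT: "transpose_mat X \<in> carrier_mat a b"
    using M X by simp_all
  have MX: "transpose_mat (M * X) = transpose_mat X * transpose_mat M"
    and XM: "transpose_mat (X * M) = transpose_mat M * transpose_mat X"
    using transpose_mult[OF M X] transpose_mult[OF X M] by simp_all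
  have "transpose_mat (M * X * M) = transpose_mat M * (transpose_mat X * transpose_mat M)"
    using transpose_mult[OF mult_carrier_mat[OF M X] M] MX by simp
  moreover have "transpose_mat (X * M * X) = transpose_mat X * (transpose_mat M * transpose_mat X)"
    using transpose_mult[OF mult_carrier_mat[OF X M] X] XM by simp
  ultimately show ?thesis
    using pX MX XM assoc_mult_mat[OF MT XT MT] assoc_mult_mat[OF XT MT XT]
    unfolding penrose_def by (metis transpose_transpose)
qed

lemma penrose_eq_mult_mult:
  fixes M X Y :: "real mat"
  assumes M: "M \<in> carrier_mat a b" and X: "X \<in> carrier_mat b a" and Y: "Y \<in> carrier_mat b a"
    and pX: "penrose M X" and pY: "penrose M Y"
  shows "X = X * M * Y"
proof -
  have MT: "transpose_mat M \<in> carrier_mat b a" and XT: "transpose_mat X \<in> carrier_mat a b"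
    and YT: "transpose_mat Y \<in> carrier_mat a b" using M X Y by simp_all
  have MX: "M * X = transpose_mat X * transpose_mat M"
    using pX transpose_mult[OF M X] unfolding penrose_def by simp
  have MY: "M * Y = transpose_mat Y * transpose_mat M"
    using pY transpose_mult[OF M Y] unfolding penrose_def by simp
  have "transpose_mat M = transpose_mat (M * Y * M)" using pY unfolding penrose_def by simp
  also have "\<dots> = transpose_mat M * (transpose_mat Y * transpose_mat M)"
    using transpose_mult[OF mult_carrier_mat[OF M Y] M] MY transpose_mult[OF M Y] by simp
  finally have MYM: "transpose_mat M = transpose_mat M * (transpose_mat Y * transpose_mat M)" .
  have "X = X * (M * X)" using pX assoc_mult_mat[OF X M X] unfolding penrose_def by simp
  also have "\<dots> = X * (transpose_mat X * (transpose_mat M * (transpose_mat Y * transpose_mat M)))"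
    using MX MYM by simp
  also have "\<dots> = X * ((M * X) * (M * Y))"
    using assoc_mult_mat[OF XT MT mult_carrier_mat[OF YT MT]] MX MY by simp
  also have "\<dots> = (X * M * X) * (M * Y)"
    using assoc_mult_mat[OF X M X] assoc_mult_mat[OF X mult_carrier_mat[OF M X] mult_carrier_mat[OF M Y]]
    by simp
  also have "\<dots> = X * M * Y" using pX assoc_mult_mat[OF X M Y] unfolding penrose_def by simp
  finally show ?thesis .
qed

lemma penrose_unique:
  fixes M X Y :: "real mat"
  assumes M: "M \<in> carrier_mat a b" and X: "X \<in> carrier_mat b a" and Y: "Y \<in> carrier_mat b a"
    and pX: "penrose M X" and pY: "penrose M Y"
  shows "X = Y"
proof -
  have MT: "transpose_mat M \<in> carrier_mat b a" and XT: "transpose_mat X \<in> carrier_mat a b"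
    and YT: "transpose_mat Y \<in> carrier_mat a b" using M X Y by simp_all
  have "transpose_mat Y = transpose_mat Y * transpose_mat M * transpose_mat X"
    using penrose_eq_mult_mult[OF MT YT XT] penrose_transpose[OF M Y pY] penrose_transpose[OF M X pX]
    by simp
  also have "\<dots> = transpose_mat (X * M * Y)"
    using transpose_mult[OF mult_carrier_mat[OF X M] Y] transpose_mult[OF X M] assoc_mult_mat[OF YT MT XT]
    by simp
  finally have "Y = X * M * Y" by (metis transpose_transpose)
  then show ?thesis using penrose_eq_mult_mult[OF M X Y pX pY] by simp
qed

lemma pinv_eqI:
  fixes M X :: "real mat"
  assumes M: "M \<in> carrier_mat a b" and X: "X \<in> carrier_mat b a" and pX: "penrose M X"
  shows "pinv M = X"
  unfolding pinv_def
proof (rule the_equality)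
  show "X \<in> carrier_mat (dim_col M) (dim_row M) \<and> M * X * M = M \<and> X * M * X = X \<and>
      transpose_mat (M * X) = M * X \<and> transpose_mat (X * M) = X * M"
    using X M pX unfolding penrose_def by auto
next
  fix Y assume "Y \<in> carrier_mat (dim_col M) (dim_row M) \<and> M * Y * M = M \<and> Y * M * Y = Y \<and>
      transpose_mat (M * Y) = M * Y \<and> transpose_mat (Y * M) = Y * M"
  then show "Y = X" using penrose_unique[OF M _ X _ pX, of Y] M unfolding penrose_def by auto
qed

text \<open>\<open>v\<^sup>T W\<^sup>T W v = |W v|\<^sup>2\<close> vanishes only at \<open>v = 0\<close> when \<open>W\<close> is injective.\<close>

lemma det_gram_mat_nonzero:
  fixes W :: "real mat"
  assumes W: "W \<in> carrier_mat a b"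
    and inj: "\<And>v. v \<in> carrier_vec b \<Longrightarrow> W *\<^sub>v v = 0\<^sub>v a \<Longrightarrow> v = 0\<^sub>v b"
  shows "det (transpose_mat W * W) \<noteq> 0"
proof
  assume "det (transpose_mat W * W) = 0"
  then obtain v where v: "v \<in> carrier_vec b" "v \<noteq> 0\<^sub>v b" "(transpose_mat W * W) *\<^sub>v v = 0\<^sub>v b"
    using det_0_iff_vec_prod_zero_field[of "transpose_mat W * W" b] W by auto
  have Wv: "W *\<^sub>v v \<in> carrier_vec a" using W v by simp
  have "(W *\<^sub>v v) \<bullet> (W *\<^sub>v v) = (transpose_mat W *\<^sub>v (W *\<^sub>v v)) \<bullet> v"
    using transpose_vec_mult_scalar[OF W v(1) Wv] by simp
  also have "\<dots> = 0" using W v by simp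
  finally have "(\<Sum>i<a. ((W *\<^sub>v v) $ i)^2) = 0" using Wv W
    unfolding scalar_prod_def by (simp add: power2_eq_square lessThan_atLeast0)
  then have "\<forall>i<a. ((W *\<^sub>v v) $ i)^2 = 0" by (subst (asm) sum_nonneg_eq_0_iff) auto
  then have "W *\<^sub>v v = 0\<^sub>v a" using Wv W by (intro eq_vecI) auto
  then show False using inj v by auto
qed

text \<open>For injective \<open>W\<close> the Moore--Penrose inverse is \<open>(W\<^sup>T W)\<^sup>-\<^sup>1 W\<^sup>T\<close>.\<close>

lemma penrose_left_inverse_exists:
  fixes W :: "real mat"
  assumes W: "W \<in> carrier_mat a b"
    and inj: "\<And>v. v \<in> carrier_vec b \<Longrightarrow> W *\<^sub>v v = 0\<^sub>v a \<Longrightarrow> v = 0\<^sub>v b"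
  shows "\<exists>X \<in> carrier_mat b a. penrose W X \<and> X * W = 1\<^sub>m b"
proof -
  define G where "G = transpose_mat W * W"
  have WT: "transpose_mat W \<in> carrier_mat b a" using W by simp
  have G: "G \<in> carrier_mat b b" unfolding G_def using W by simp
  have GT: "transpose_mat G = G"
    unfolding G_def using transpose_mult[OF WT W] by simp
  obtain N where N: "N \<in> carrier_mat b b" "N * G = 1\<^sub>m b" "G * N = 1\<^sub>m b"
    using det_non_zero_imp_unit[OF G det_gram_mat_nonzero[OF W inj, folded G_def], of undefined]
    unfolding Units_def ring_mat_simps by auto
  have NT: "transpose_mat N = N"
  proof -
    have NTG: "transpose_mat N * G = 1\<^sub>m b"
      using arg_cong[OF N(3), of transpose_mat] transpose_mult[OF G N(1)] GT by simp
    have "transpose_mat N = transpose_mat N * (G * N)" using N by simp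
    also have "\<dots> = (transpose_mat N * G) * N"
      using assoc_mult_mat[of "transpose_mat N" b b G b N b] G N by simp
    also have "\<dots> = N" using NTG N by simp
    finally show ?thesis .
  qed
  define X where "X = N * transpose_mat W"
  have X: "X \<in> carrier_mat b a" unfolding X_def using WT N by simp
  have XW: "X * W = 1\<^sub>m b" unfolding X_def G_def[symmetric] using assoc_mult_mat[OF N(1) WT W] N G_def
    by simp
  have "transpose_mat (W * X) = (W * transpose_mat N) * transpose_mat W"
    unfolding X_def using transpose_mult[OF W mult_carrier_mat[OF N(1) WT]] transpose_mult[OF N(1) WT]
    by simp
  also have "\<dots> = W * X" unfolding X_def NT using assoc_mult_mat[OF W N(1) WT] by simp
  finally have "penrose W X"
    unfolding penrose_def using XW W X assoc_mult_mat[OF W X W] by (intro conjI) simp_all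
  with X XW show ?thesis by blast
qed

lemma pinv_left_inverse:
  fixes V :: "real mat"
  assumes V: "V \<in> carrier_mat a b"
    and inj: "\<And>v. v \<in> carrier_vec b \<Longrightarrow> V *\<^sub>v v = 0\<^sub>v a \<Longrightarrow> v = 0\<^sub>v b"
  shows "pinv V \<in> carrier_mat b a" and "pinv V * V = 1\<^sub>m b"
  using penrose_left_inverse_exists[OF V inj] pinv_eqI[OF V] by auto

lemma pinv_right_inverse:
  fixes M R :: "real mat"
  assumes M: "M \<in> carrier_mat k l" and R: "R \<in> carrier_mat l k" and MR: "M * R = 1\<^sub>m k"
  shows "pinv M \<in> carrier_mat l k" and "M * pinv M = 1\<^sub>m k"
proof -
  have MT: "transpose_mat M \<in> carrier_mat l k" and RT: "transpose_mat R \<in> carrier_mat k l"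
    using M R by simp_all
  have RTMT: "transpose_mat R * transpose_mat M = 1\<^sub>m k" using transpose_mult[OF M R] MR by simp
  have "v = 0\<^sub>v k" if v: "v \<in> carrier_vec k" and "transpose_mat M *\<^sub>v v = 0\<^sub>v l" for v
  proof -
    have "v = transpose_mat R *\<^sub>v (transpose_mat M *\<^sub>v v)"
      using RTMT RT MT v by (simp flip: assoc_mult_mat_vec)
    also have "\<dots> = 0\<^sub>v k" using that RT by (intro eq_vecI) auto
    finally show ?thesis .
  qed
  then obtain X where X: "X \<in> carrier_mat k l" and pX: "penrose (transpose_mat M) X"
    and XM: "X * transpose_mat M = 1\<^sub>m k"
    using penrose_left_inverse_exists[OF MT] by blast
  have "pinv M = transpose_mat X"
    using pinv_eqI[OF M] penrose_transpose[OF MT X pX] X by simp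
  moreover have "M * transpose_mat X = 1\<^sub>m k"
    using arg_cong[OF XM, of transpose_mat] transpose_mult[OF X MT] by simp
  ultimately show "pinv M \<in> carrier_mat l k" and "M * pinv M = 1\<^sub>m k" using X by simp_all
qed

section \<open>Full row rank and surjectivity\<close>

lemma mat_imageI: "M \<in> carrier_mat k l \<Longrightarrow> x \<in> carrier_vec l \<Longrightarrow> M *\<^sub>v x \<in> mat_image M"
  unfolding mat_image_def by auto

lemma mat_imageE:
  assumes "M \<in> carrier_mat k l" and "y \<in> mat_image M"
  obtains x where "x \<in> carrier_vec l" and "M *\<^sub>v x = y"
  using assms unfolding mat_image_def by auto

lemma mat_image_subset: "M \<in> carrier_mat k l \<Longrightarrow> mat_image M \<subseteq> carrier_vec k"
  unfolding mat_image_def by auto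

lemma right_inverse_if_mat_image_full:
  fixes M :: "real mat"
  assumes M: "M \<in> carrier_mat k l" and surj: "mat_image M = carrier_vec k"
  shows "\<exists>R \<in> carrier_mat l k. M * R = 1\<^sub>m k"
proof -
  have "\<exists>x. x \<in> carrier_vec l \<and> M *\<^sub>v x = unit_vec k j" for j
    using surj mat_imageE[OF M, of "unit_vec k j"] by (metis unit_vec_carrier)
  then obtain g where g: "\<And>j. g j \<in> carrier_vec l \<and> M *\<^sub>v g j = unit_vec k j" by metis
  define R where "R = mat l k (\<lambda>(i,j). g j $ i)"
  have R: "R \<in> carrier_mat l k" unfolding R_def by simp
  have col_R: "col R j = g j" if "j < k" for j
    using that g[of j] unfolding R_def by (auto simp: col_def)
  have "(M * R) $$ (i, j) = 1\<^sub>m k $$ (i, j)" if "i < k" "j < k" for i j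
  proof -
    have "(M * R) $$ (i, j) = (M *\<^sub>v g j) $ i" using that M R col_R by simp
    then show ?thesis using that g[of j] by simp
  qed
  then have "M * R = 1\<^sub>m k" using M R by (intro eq_matI) auto
  with R show ?thesis by blast
qed

lemma rk_eq_dim_row_iff:
  fixes M :: "real mat"
  assumes M: "M \<in> carrier_mat k l"
  shows "rk M = k \<longleftrightarrow> mat_image M = carrier_vec k"
proof -
  interpret vec_space "TYPE(real)" k .
  have col_space: "span (set (cols M)) = mat_image M"
    using col_space_eq[OF M] M unfolding col_space_def mat_image_def by auto
  have rk: "rk M = rank M" unfolding rk_def using M by simp
  show ?thesis
  proof
    assume "rk M = k"
    obtain S where S: "maximal S (\<lambda>T. T \<subseteq> set (cols M) \<and> lin_indpt T)"
      using maximal_exists[of "\<lambda>T. T \<subseteq> set (cols M) \<and> lin_indpt T" "card (set (cols M))" "{}"]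
      by (meson List.finite_set card_mono empty_iff empty_subsetI finite_lin_indpt2 rev_finite_subset)
    have card: "card S = k" using rank_card_indpt[OF M S] \<open>rk M = k\<close> rk by simp
    have S_cols: "S \<subseteq> set (cols M)" and li: "lin_indpt S" using S unfolding maximal_def by auto
    have S_carrier: "S \<subseteq> carrier_vec k" using S_cols M cols_dim by blast
    have "basis S"
      by (rule dim_li_is_basis) (use S_cols S_carrier li card dim_is_n finite_subset in auto)
    then have "span S = carrier_vec k" unfolding basis_def by simp
    moreover have "span S \<subseteq> mat_image M" using span_is_monotone[OF S_cols] col_space by simp
    moreover have "mat_image M \<subseteq> carrier_vec k" by (rule mat_image_subset[OF M])
    ultimately show "mat_image M = carrier_vec k" by blast
  next
    assume "mat_image M = carrier_vec k"
    then have "vs (span (set (cols M))) = V" using col_space unfolding module_vec_def by simp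
    then show "rk M = k" using rk dim_is_n unfolding rank_def by simp
  qed
qed

lemma dim_row_le_dim_col_if_mat_image_full:
  fixes M :: "real mat"
  assumes M: "M \<in> carrier_mat k l" and surj: "mat_image M = carrier_vec k"
  shows "k \<le> l"
proof -
  interpret vec_space "TYPE(real)" k .
  have "rank M \<le> l" by (rule rank_le_nc[OF M])
  then show ?thesis using rk_eq_dim_row_iff[OF M] surj M unfolding rk_def by simp
qed

lemma mat_image_full_if_mult:
  fixes X Y :: "real mat"
  assumes X: "X \<in> carrier_mat k n" and Y: "Y \<in> carrier_mat n l"
    and surj: "mat_image (X * Y) = carrier_vec k"
  shows "mat_image X = carrier_vec k"
proof -
  have "y \<in> mat_image X" if y: "y \<in> carrier_vec k" for y
  proof -
    have XY: "X * Y \<in> carrier_mat k l" using X Y by simp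
    obtain x where x: "x \<in> carrier_vec l" and "(X * Y) *\<^sub>v x = y"
      using y surj mat_imageE[OF XY] by blast
    then have "X *\<^sub>v (Y *\<^sub>v x) = y" using X Y by simp
    then show ?thesis using mat_imageI[OF X, of "Y *\<^sub>v x"] x Y by simp
  qed
  moreover have "mat_image X \<subseteq> carrier_vec k" by (rule mat_image_subset[OF X])
  ultimately show ?thesis by blast
qed

lemma mat_image_smult:
  fixes M :: "real mat"
  assumes M: "M \<in> carrier_mat k l" and c: "c \<noteq> 0"
  shows "mat_image (c \<cdot>\<^sub>m M) = mat_image M"
proof -
  have smult: "(d \<cdot>\<^sub>m M) *\<^sub>v x = M *\<^sub>v (d \<cdot>\<^sub>v x)" if "x \<in> carrier_vec l" for d x
    using that M by (intro eq_vecI) (auto simp: scalar_prod_def sum_distrib_left ac_simps)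
  have cM: "c \<cdot>\<^sub>m M \<in> carrier_mat k l" using M by simp
  show ?thesis
  proof (intro equalityI subsetI)
    fix y assume "y \<in> mat_image (c \<cdot>\<^sub>m M)"
    then obtain x where "x \<in> carrier_vec l" "(c \<cdot>\<^sub>m M) *\<^sub>v x = y"
      by (rule mat_imageE[OF cM])
    then show "y \<in> mat_image M"
      using smult mat_imageI[OF M] by (metis smult_carrier_vec)
  next
    fix y assume "y \<in> mat_image M"
    then obtain x where x: "x \<in> carrier_vec l" and "M *\<^sub>v x = y"
      by (rule mat_imageE[OF M])
    moreover have "(1 / c) \<cdot>\<^sub>v x \<in> carrier_vec l" using x by simp
    moreover have "c \<cdot>\<^sub>v ((1 / c) \<cdot>\<^sub>v x) = x" using c by (simp add: smult_smult_assoc)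
    ultimately show "y \<in> mat_image (c \<cdot>\<^sub>m M)"
      using smult mat_imageI[OF cM] by metis
  qed
qed

section \<open>Smooth scalar and matrix functions\<close>

definition smooth :: "(real \<Rightarrow> real) \<Rightarrow> bool" where
  "smooth g \<longleftrightarrow> (\<forall>k t. (Derivative.deriv ^^ k) g differentiable (at t))"

lemma smooth_differentiable: "smooth g \<Longrightarrow> g differentiable (at t)"
  unfolding smooth_def by (metis funpow_0)

lemma smooth_deriv: "smooth g \<Longrightarrow> smooth (Derivative.deriv g)"
  unfolding smooth_def by (metis funpow_Suc_right o_apply)

lemma smooth_const: "smooth (\<lambda>s. c)"
proof -
  have "(Derivative.deriv ^^ Suc k) (\<lambda>s. c) = (\<lambda>s. 0)" for k
    by (induction k) (auto intro!: DERIV_imp_deriv)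
  then have "(Derivative.deriv ^^ k) (\<lambda>s. c) differentiable (at t)" for k t
    by (cases k) auto
  then show ?thesis unfolding smooth_def by auto
qed

lemma deriv_sum_scale:
  fixes f :: "'b \<Rightarrow> real \<Rightarrow> real"
  assumes "finite S" and "\<And>l. l \<in> S \<Longrightarrow> f l differentiable (at t)"
  shows "Derivative.deriv (\<lambda>s. \<Sum>l\<in>S. c l * f l s) t = (\<Sum>l\<in>S. c l * Derivative.deriv (f l) t)"
proof (rule DERIV_imp_deriv)
  have "DERIV (f l) t :> Derivative.deriv (f l) t" if "l \<in> S" for l
    using assms(2)[OF that] DERIV_deriv_iff_real_differentiable by blast
  then show "DERIV (\<lambda>s. \<Sum>l\<in>S. c l * f l s) t :> (\<Sum>l\<in>S. c l * Derivative.deriv (f l) t)"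
    by (intro DERIV_sum DERIV_cmult)
qed

lemma deriv_iter_scale_add:
  assumes f: "smooth f" and g: "smooth g"
  shows "(Derivative.deriv ^^ k) (\<lambda>s. c * f s + g s) =
    (\<lambda>s. c * (Derivative.deriv ^^ k) f s + (Derivative.deriv ^^ k) g s)"
proof (induction k)
  case (Suc k)
  have "DERIV (\<lambda>s. c * (Derivative.deriv ^^ k) f s + (Derivative.deriv ^^ k) g s) t :>
      c * (Derivative.deriv ^^ Suc k) f t + (Derivative.deriv ^^ Suc k) g t" for t
    using f g unfolding smooth_def
    by (auto intro!: DERIV_add DERIV_cmult simp: DERIV_deriv_iff_real_differentiable)
  then show ?case using Suc by (auto intro!: DERIV_imp_deriv)
qed simp

lemma smooth_scale_add: "smooth f \<Longrightarrow> smooth g \<Longrightarrow> smooth (\<lambda>s. c * f s + g s)"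
  unfolding smooth_def[of "\<lambda>s. c * f s + g s"] deriv_iter_scale_add
  by (intro allI differentiable_add differentiable_mult differentiable_const) (auto simp: smooth_def)

lemma smooth_sum_scale:
  "finite S \<Longrightarrow> (\<And>l. l \<in> S \<Longrightarrow> smooth (f l)) \<Longrightarrow> smooth (\<lambda>s. \<Sum>l\<in>S. c l * f l s)"
proof (induction S rule: finite_induct)
  case empty
  then show ?case using smooth_const[of 0] by simp
next
  case (insert x F)
  then show ?case using smooth_scale_add[of "f x" "\<lambda>s. \<Sum>l\<in>F. c l * f l s" "c x"] by simp
qed

definition smooth_mat :: "nat \<Rightarrow> nat \<Rightarrow> (real \<Rightarrow> real mat) \<Rightarrow> bool" where
  "smooth_mat k l M \<longleftrightarrow>
    (\<forall>s. M s \<in> carrier_mat k l) \<and> (\<forall>i<k. \<forall>j<l. smooth (\<lambda>s. M s $$ (i, j)))"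

lemma smooth_matD:
  assumes "smooth_mat k l M"
  shows "M s \<in> carrier_mat k l" and "i < k \<Longrightarrow> j < l \<Longrightarrow> smooth (\<lambda>s. M s $$ (i, j))"
  using assms unfolding smooth_mat_def by auto

lemma mderiv_carrier: "M t \<in> carrier_mat k l \<Longrightarrow> mderiv M t \<in> carrier_mat k l"
  unfolding mderiv_def by simp

lemma mderiv_index:
  "M t \<in> carrier_mat k l \<Longrightarrow> i < k \<Longrightarrow> j < l \<Longrightarrow>
    mderiv M t $$ (i, j) = Derivative.deriv (\<lambda>s. M s $$ (i, j)) t"
  unfolding mderiv_def by simp

lemma mderiv_const: "mderiv (\<lambda>s. X) t = 0\<^sub>m (dim_row X) (dim_col X)"
  unfolding mderiv_def by (intro eq_matI) auto

lemma mult_mat_index_sum: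
  "X \<in> carrier_mat h k \<Longrightarrow> Y \<in> carrier_mat k l \<Longrightarrow> i < h \<Longrightarrow> j < l \<Longrightarrow>
    (X * Y) $$ (i, j) = (\<Sum>x\<in>{0..<k}. X $$ (i, x) * Y $$ (x, j))"
  by (simp add: scalar_prod_def)

lemma mderiv_mult_left:
  assumes K: "K \<in> carrier_mat h k" and M: "smooth_mat k l M"
  shows "mderiv (\<lambda>s. K * M s) t = K * mderiv M t"
proof (rule eq_matI)
  fix i j assume "i < dim_row (K * mderiv M t)" and "j < dim_col (K * mderiv M t)"
  then have i: "i < h" and j: "j < l" using K smooth_matD(1)[OF M, of t] by (auto simp: mderiv_def)
  have KM: "K * M s \<in> carrier_mat h l" for s using K smooth_matD(1)[OF M] by simp
  have "mderiv (\<lambda>s. K * M s) t $$ (i, j)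
      = Derivative.deriv (\<lambda>s. \<Sum>x\<in>{0..<k}. K $$ (i, x) * M s $$ (x, j)) t"
    using mderiv_index[OF KM i j] mult_mat_index_sum[OF K smooth_matD(1)[OF M] i j] by simp
  also have "\<dots> = (\<Sum>x\<in>{0..<k}. K $$ (i, x) * Derivative.deriv (\<lambda>s. M s $$ (x, j)) t)"
    using j by (intro deriv_sum_scale smooth_differentiable smooth_matD(2)[OF M]) auto
  also have "\<dots> = (K * mderiv M t) $$ (i, j)"
    using mult_mat_index_sum[OF K mderiv_carrier[OF smooth_matD(1)[OF M]] i j]
      mderiv_index[OF smooth_matD(1)[OF M]] j by simp
  finally show "mderiv (\<lambda>s. K * M s) t $$ (i, j) = (K * mderiv M t) $$ (i, j)" .
qed (use K smooth_matD(1)[OF M] in \<open>simp_all add: mderiv_def\<close>)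

lemma smooth_mat_mult_left:
  assumes K: "K \<in> carrier_mat h k" and M: "smooth_mat k l M"
  shows "smooth_mat h l (\<lambda>s. K * M s)"
  unfolding smooth_mat_def
proof (intro conjI allI impI)
  show "K * M s \<in> carrier_mat h l" for s using K smooth_matD(1)[OF M] by simp
  fix i j assume i: "i < h" and j: "j < l"
  have "(\<lambda>s. (K * M s) $$ (i, j)) = (\<lambda>s. \<Sum>x\<in>{0..<k}. K $$ (i, x) * M s $$ (x, j))"
    using mult_mat_index_sum[OF K smooth_matD(1)[OF M] i j] by simp
  then show "smooth (\<lambda>s. (K * M s) $$ (i, j))"
    using j by (auto intro!: smooth_sum_scale smooth_matD(2)[OF M])
qed

lemma smooth_mat_mderiv:
  assumes M: "smooth_mat k l M"
  shows "smooth_mat k l (mderiv M)"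
proof -
  have "(\<lambda>s. mderiv M s $$ (i, j)) = Derivative.deriv (\<lambda>s. M s $$ (i, j))" if "i < k" "j < l" for i j
    using that mderiv_index[OF smooth_matD(1)[OF M]] by auto
  then show ?thesis
    using M unfolding smooth_mat_def by (auto simp: mderiv_carrier smooth_deriv)
qed

lemma smooth_mat_diff:
  assumes M: "smooth_mat k l M" and N: "smooth_mat k l N"
  shows "smooth_mat k l (\<lambda>s. M s - N s)"
  unfolding smooth_mat_def
proof (intro conjI allI impI)
  show "M s - N s \<in> carrier_mat k l" for s using smooth_matD(1)[OF N] by (rule minus_carrier_mat)
  fix i j assume i: "i < k" and j: "j < l"
  have entry: "(\<lambda>s. (M s - N s) $$ (i, j)) = (\<lambda>s. (-1) * N s $$ (i, j) + M s $$ (i, j))"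
    using i j smooth_matD(1)[OF N, THEN carrier_matD(1)] smooth_matD(1)[OF N, THEN carrier_matD(2)]
    by auto
  show "smooth (\<lambda>s. (M s - N s) $$ (i, j))"
    unfolding entry using i j by (intro smooth_scale_add smooth_matD(2)[OF M] smooth_matD(2)[OF N])
qed

lemma smooth_mat_dop_iter:
  assumes A: "A \<in> carrier_mat k k" and M: "smooth_mat k l M"
  shows "smooth_mat k l ((dop A ^^ j) M)"
proof (induction j)
  case (Suc j)
  then show ?case unfolding funpow.simps o_apply dop_def
    by (intro smooth_mat_diff smooth_mat_mderiv smooth_mat_mult_left[OF A])
qed (simp add: M)

section \<open>The relative degree structure of \<open>C A\<^sup>k (d/dt - A)\<^sup>j M\<close>\<close>

lemma C_pow_mult_dop_iter_Suc:
  assumes A: "A \<in> carrier_mat n n" and C: "C \<in> carrier_mat p n" and M: "smooth_mat n m M"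
  shows "C * A ^\<^sub>m k * (dop A ^^ Suc j) M t =
    mderiv (\<lambda>s. C * A ^\<^sub>m k * (dop A ^^ j) M s) t - C * A ^\<^sub>m Suc k * (dop A ^^ j) M t"
proof -
  let ?D = "(dop A ^^ j) M"
  have D: "smooth_mat n m ?D" by (rule smooth_mat_dop_iter[OF A M])
  have CA: "C * A ^\<^sub>m k \<in> carrier_mat p n" using A C by simp
  have Dt: "?D t \<in> carrier_mat n m" by (rule smooth_matD(1)[OF D])
  have "C * A ^\<^sub>m k * (dop A ^^ Suc j) M t = C * A ^\<^sub>m k * (mderiv ?D t - A * ?D t)"
    by (simp add: dop_def)
  also have "\<dots> = C * A ^\<^sub>m k * mderiv ?D t - C * A ^\<^sub>m k * (A * ?D t)"
    using CA A Dt by (intro mult_minus_distrib_mat) (auto intro: mderiv_carrier)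
  also have "C * A ^\<^sub>m k * mderiv ?D t = mderiv (\<lambda>s. C * A ^\<^sub>m k * ?D s) t"
    by (rule mderiv_mult_left[OF CA D, symmetric])
  also have "C * A ^\<^sub>m k * (A * ?D t) = C * A ^\<^sub>m Suc k * ?D t"
    using assoc_mult_mat[OF CA A Dt] assoc_mult_mat[OF C pow_carrier_mat[OF A] A] by simp
  finally show ?thesis .
qed

lemma C_pow_mult_dop_iter_zero:
  assumes A: "A \<in> carrier_mat n n" and C: "C \<in> carrier_mat p n" and M: "smooth_mat n m M"
    and vanish: "\<And>k s. k + 2 \<le> r \<Longrightarrow> C * A ^\<^sub>m k * M s = 0\<^sub>m p m"
  shows "k + j + 2 \<le> r \<Longrightarrow> C * A ^\<^sub>m k * (dop A ^^ j) M t = 0\<^sub>m p m"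
proof (induction j arbitrary: k t)
  case 0
  then show ?case using vanish by simp
next
  case (Suc j)
  then have "(\<lambda>s. C * A ^\<^sub>m k * (dop A ^^ j) M s) = (\<lambda>s. 0\<^sub>m p m)" by simp
  then show ?case
    using C_pow_mult_dop_iter_Suc[OF A C M] Suc.IH[of "Suc k"] Suc.prems
    by (auto simp: mderiv_const)
qed

text \<open>Each application of \<open>d/dt - A\<close> trades one power of \<open>A\<close> for a sign, because the derivative of
  the identically vanishing \<open>C A\<^sup>k (d/dt - A)\<^sup>j M\<close> is zero.\<close>

lemma C_pow_mult_dop_iter_antidiag:
  assumes A: "A \<in> carrier_mat n n" and C: "C \<in> carrier_mat p n" and M: "smooth_mat n m M"
    and vanish: "\<And>k s. k + 2 \<le> r \<Longrightarrow> C * A ^\<^sub>m k * M s = 0\<^sub>m p m"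
  shows "k + j + 1 = r \<Longrightarrow> C * A ^\<^sub>m k * (dop A ^^ j) M t = (-1) ^ j \<cdot>\<^sub>m (C * A ^\<^sub>m (r - 1) * M t)"
proof (induction j arbitrary: k t)
  case 0
  have "C * A ^\<^sub>m k * M t \<in> carrier_mat p m"
    using A C smooth_matD(1)[OF M] by (intro mult_carrier_mat pow_carrier_mat) auto
  then show ?case using 0 by (auto intro!: eq_matI)
next
  case (Suc j)
  have G: "C * A ^\<^sub>m (r - 1) * M t \<in> carrier_mat p m"
    using A C smooth_matD(1)[OF M] by (intro mult_carrier_mat pow_carrier_mat) auto
  have "(\<lambda>s. C * A ^\<^sub>m k * (dop A ^^ j) M s) = (\<lambda>s. 0\<^sub>m p m)"
    using C_pow_mult_dop_iter_zero[OF A C M vanish] Suc.prems by simp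
  then have "C * A ^\<^sub>m k * (dop A ^^ Suc j) M t = 0\<^sub>m p m - (-1) ^ j \<cdot>\<^sub>m (C * A ^\<^sub>m (r - 1) * M t)"
    using C_pow_mult_dop_iter_Suc[OF A C M] Suc.IH[of "Suc k"] Suc.prems by (simp add: mderiv_const)
  then show ?case using G C smooth_matD(1)[OF M, of t] by (auto intro!: eq_matI)
qed

section \<open>Block anti-triangular matrices\<close>

lemma block_index_less: "i < r \<Longrightarrow> a < p \<Longrightarrow> i * p + a < r * (p::nat)"
proof -
  assume "i < r" "a < p"
  then have "i * p + a < Suc i * p" by simp
  also have "\<dots> \<le> r * p" using \<open>i < r\<close> by (intro mult_le_mono1) simp
  finally show ?thesis .
qed

definition block_vec :: "nat \<Rightarrow> nat \<Rightarrow> real vec \<Rightarrow> real vec" where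
  "block_vec r j w = vec (r * dim_vec w) (\<lambda>c. if c div dim_vec w = j then w $ (c mod dim_vec w) else 0)"

lemma block_vec_carrier: "w \<in> carrier_vec m \<Longrightarrow> block_vec r j w \<in> carrier_vec (r * m)"
  unfolding block_vec_def by simp

lemma mult_block_vec_index:
  fixes M G :: "real mat"
  assumes M: "M \<in> carrier_mat (r * p) (r * m)" and G: "G \<in> carrier_mat p m"
    and block: "\<And>a b. a < p \<Longrightarrow> b < m \<Longrightarrow> M $$ (i * p + a, j * m + b) = G $$ (a, b)"
    and i: "i < r" and j: "j < r" and a: "a < p" and w: "w \<in> carrier_vec m"
  shows "(M *\<^sub>v block_vec r j w) $ (i * p + a) = (G *\<^sub>v w) $ a"
proof -
  let ?x = "block_vec r j w" and ?row = "i * p + a"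
  have x: "?x $ c = (if c div m = j then w $ (c mod m) else 0)" if "c < r * m" for c
    using that w unfolding block_vec_def by simp
  have "m + j * m \<le> r * m" using j mult_le_mono1[of "Suc j" r m] by simp
  then have sub: "{j * m..<m + j * m} \<subseteq> {0..<r * m}" by auto
  have "(M *\<^sub>v ?x) $ ?row = (\<Sum>c\<in>{0..<r * m}. M $$ (?row, c) * ?x $ c)"
    using M block_index_less[OF i a] carrier_vecD[OF block_vec_carrier[OF w, of r j]]
    by (simp add: scalar_prod_def)
  also have "\<dots> = (\<Sum>c\<in>{j * m..<m + j * m}. M $$ (?row, c) * ?x $ c)"
  proof (rule sum.mono_neutral_right[OF _ sub])
    have "c \<in> {j * m..<m + j * m}" if "c div m = j" and "c < r * m" for c
    proof -
      have "c = j * m + c mod m" using \<open>c div m = j\<close> div_mult_mod_eq[of c m] by simp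
      moreover have "c mod m < m" using \<open>c < r * m\<close> by (cases "m = 0") auto
      ultimately show ?thesis by (metis atLeastLessThan_iff add.commute add_less_cancel_right le_add1)
    qed
    then show "\<forall>c\<in>{0..<r * m} - {j * m..<m + j * m}. M $$ (?row, c) * ?x $ c = 0"
      using x by auto
  qed simp
  also have "\<dots> = (\<Sum>b\<in>{0..<m}. M $$ (?row, j * m + b) * w $ b)"
    using sub x by (subst sum.shift_bounds_nat_ivl[of _ 0 "j * m", simplified]) (auto simp: add.commute)
  also have "\<dots> = (G *\<^sub>v w) $ a"
    using G w a block by (simp add: scalar_prod_def)
  finally show ?thesis .
qed

locale block_anti_triangular =
  fixes r p m :: nat and M :: "real mat" and G :: "nat \<Rightarrow> nat \<Rightarrow> real mat"
  assumes M: "M \<in> carrier_mat (r * p) (r * m)" and G: "\<And>i j. G i j \<in> carrier_mat p m"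
    and blocks: "\<And>i j a b. i < r \<Longrightarrow> j < r \<Longrightarrow> a < p \<Longrightarrow> b < m \<Longrightarrow>
      M $$ (i * p + a, j * m + b) = G i j $$ (a, b)"
    and upper: "\<And>i j. i + j + 1 < r \<Longrightarrow> G i j = 0\<^sub>m p m"
    and antidiag: "\<And>i j. i + j + 1 = r \<Longrightarrow> mat_image (G i j) = carrier_vec p"
begin

text \<open>Block column \<open>j\<close> vanishes above the anti-diagonal block \<open>(i, j)\<close>, so a preimage of block row
  \<open>i\<close> under \<open>G i j\<close> fixes that block row without disturbing the ones above it.\<close>

lemma back_substitution_step:
  assumes ij: "i + j + 1 = r" and y: "y \<in> carrier_vec (r * p)"
    and zero: "\<And>l. l < i * p \<Longrightarrow> y $ l = 0"
  obtains x where "x \<in> carrier_vec (r * m)" and "\<And>l. l < Suc i * p \<Longrightarrow> (y - M *\<^sub>v x) $ l = 0"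
proof -
  obtain w where w: "w \<in> carrier_vec m" and Gw: "G i j *\<^sub>v w = vec p (\<lambda>a. y $ (i * p + a))"
    using antidiag[OF ij] mat_imageE[OF G] by (metis vec_carrier)
  define x where "x = block_vec r j w"
  have x: "x \<in> carrier_vec (r * m)" unfolding x_def by (rule block_vec_carrier[OF w])
  have "(y - M *\<^sub>v x) $ l = 0" if l: "l < Suc i * p" for l
  proof -
    have p: "p > 0" using l by (cases p) auto
    define i' a where "i' = l div p" and "a = l mod p"
    have l_eq: "l = i' * p + a" and a: "a < p" unfolding i'_def a_def using p by auto
    have "i' < Suc i" unfolding i'_def using l by (rule less_mult_imp_div_less)
    then have i': "i' \<le> i" "i' < r" using ij by auto
    have Mx: "(M *\<^sub>v x) $ l = (G i' j *\<^sub>v w) $ a"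
      unfolding x_def l_eq using blocks i' ij a w by (intro mult_block_vec_index[OF M G]) auto
    have dim: "l < r * p" using l_eq block_index_less[OF i'(2) a] by simp
    show "(y - M *\<^sub>v x) $ l = 0"
    proof (cases "i' < i")
      case True
      then have "l < i * p" using l_eq block_index_less[OF True a] by simp
      then show ?thesis using zero Mx upper[of i' j] True ij w a M x y dim by simp
    next
      case False
      then show ?thesis using Mx Gw i' a M x y l_eq dim by simp
    qed
  qed
  with x show ?thesis using that by blast
qed

lemma mat_image_eq: "mat_image M = carrier_vec (r * p)"
proof -
  have "y \<in> mat_image M"
    if "i \<le> r" and "y \<in> carrier_vec (r * p)" and "\<And>l. l < i * p \<Longrightarrow> y $ l = 0" for i y
    using that
  proof (induction "r - i" arbitrary: i y)
    case 0
    then have "y = M *\<^sub>v 0\<^sub>v (r * m)" using M by (intro eq_vecI) auto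
    then show ?case using mat_imageI[OF M, of "0\<^sub>v (r * m)"] by simp
  next
    case (Suc d)
    then have "i + d + 1 = r" by simp
    then obtain x where x: "x \<in> carrier_vec (r * m)"
      and "\<And>l. l < Suc i * p \<Longrightarrow> (y - M *\<^sub>v x) $ l = 0"
      using back_substitution_step Suc.prems by metis
    then have "y - M *\<^sub>v x \<in> mat_image M"
      using Suc.hyps(1)[of "Suc i"] Suc.hyps(2) Suc.prems(2) M by simp
    then obtain x' where x': "x' \<in> carrier_vec (r * m)" and "M *\<^sub>v x' = y - M *\<^sub>v x"
      by (rule mat_imageE[OF M])
    then have "M *\<^sub>v (x' + x) = y"
      using M x Suc.prems(2) by (simp add: mult_add_distrib_mat_vec[OF M x' x]) (intro eq_vecI; simp)
    then show ?case using mat_imageI[OF M, of "x' + x"] x x' by simp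
  qed
  then show ?thesis using mat_image_subset[OF M] by fastforce
qed

end

section \<open>The matrices \<open>\<C>\<close> and \<open>\<B>(t)\<close>\<close>

lemma dop_iter_carrier:
  assumes A: "A \<in> carrier_mat k k" and M: "\<And>s. M s \<in> carrier_mat k l"
  shows "(dop A ^^ j) M t \<in> carrier_mat k l"
proof (induction j arbitrary: t)
  case (Suc j)
  then show ?case using A by (auto simp: dop_def intro!: minus_carrier_mat mderiv_carrier)
qed (simp add: M)

lemma calC_carrier: "C \<in> carrier_mat p n \<Longrightarrow> calC A C r \<in> carrier_mat (r * p) n"
  unfolding calC_def by auto

lemma calB_carrier: "B \<in> carrier_mat n m \<Longrightarrow> calB A B L r t \<in> carrier_mat n (r * m)"
  unfolding calB_def by auto

lemma calC_mult_calB_index: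
  assumes A: "A \<in> carrier_mat n n" and B: "B \<in> carrier_mat n m" and C: "C \<in> carrier_mat p n"
    and L: "\<And>s. L s \<in> carrier_mat m m"
    and i: "i < r" and a: "a < p" and j: "j < r" and b: "b < m"
  shows "(calC A C r * calB A B L r t) $$ (i * p + a, j * m + b) =
    (C * A ^\<^sub>m i * (dop A ^^ j) (\<lambda>s. B * L s) t) $$ (a, b)"
proof -
  have CA: "C * A ^\<^sub>m i \<in> carrier_mat p n" using A C by simp
  have D: "(dop A ^^ j) (\<lambda>s. B * L s) t \<in> carrier_mat n m"
    using B L by (intro dop_iter_carrier[OF A]) simp
  have "(calC A C r * calB A B L r t) $$ (i * p + a, j * m + b) =
      (\<Sum>x\<in>{0..<n}. calC A C r $$ (i * p + a, x) * calB A B L r t $$ (x, j * m + b))"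
    by (rule mult_mat_index_sum[OF calC_carrier[OF C] calB_carrier[OF B]
          block_index_less[OF i a] block_index_less[OF j b]])
  also have "\<dots> = (\<Sum>x\<in>{0..<n}. (C * A ^\<^sub>m i) $$ (a, x) * (dop A ^^ j) (\<lambda>s. B * L s) t $$ (x, b))"
    using B C block_index_less[OF i a] block_index_less[OF j b] a b
    by (intro sum.cong) (auto simp: calC_def calB_def)
  also have "\<dots> = (C * A ^\<^sub>m i * (dop A ^^ j) (\<lambda>s. B * L s) t) $$ (a, b)"
    by (rule mult_mat_index_sum[OF CA D a b, symmetric])
  finally show ?thesis .
qed

locale relative_degree_system =
  fixes n m p r :: nat and A B C :: "real mat" and L :: "real \<Rightarrow> real mat"
  assumes A: "A \<in> carrier_mat n n" and B: "B \<in> carrier_mat n m" and C: "C \<in> carrier_mat p n"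
    and L: "smooth_mat m m L"
    and vanish: "\<And>k s. k + 2 \<le> r \<Longrightarrow> C * A ^\<^sub>m k * B * L s = 0\<^sub>m p m"
    and Gamma_onto: "\<And>t. mat_image (C * A ^\<^sub>m (r - 1) * B * L t) = carrier_vec p"
begin

lemma L_carrier: "L s \<in> carrier_mat m m"
  by (rule smooth_matD(1)[OF L])

lemma Gamma_carrier: "C * A ^\<^sub>m (r - 1) * B * L t \<in> carrier_mat p m"
  using A B C L_carrier by (intro mult_carrier_mat pow_carrier_mat) auto

lemma C_pow_mult_dop_iter_input:
  shows "i + j + 2 \<le> r \<Longrightarrow> C * A ^\<^sub>m i * (dop A ^^ j) (\<lambda>s. B * L s) t = 0\<^sub>m p m"
    and "i + j + 1 = r \<Longrightarrow>
      C * A ^\<^sub>m i * (dop A ^^ j) (\<lambda>s. B * L s) t = (-1) ^ j \<cdot>\<^sub>m (C * A ^\<^sub>m (r - 1) * B * L t)"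
proof -
  have CA: "C * A ^\<^sub>m k \<in> carrier_mat p n" for k using A C by simp
  have assoc: "C * A ^\<^sub>m k * (B * L s) = C * A ^\<^sub>m k * B * L s" for k s
    using assoc_mult_mat[OF CA B L_carrier] by simp
  have BL: "smooth_mat n m (\<lambda>s. B * L s)" by (rule smooth_mat_mult_left[OF B L])
  have vanish': "C * A ^\<^sub>m k * (B * L s) = 0\<^sub>m p m" if "k + 2 \<le> r" for k s
    using vanish[OF that] assoc by simp
  show "i + j + 2 \<le> r \<Longrightarrow> C * A ^\<^sub>m i * (dop A ^^ j) (\<lambda>s. B * L s) t = 0\<^sub>m p m"
    by (rule C_pow_mult_dop_iter_zero[OF A C BL vanish'])
  show "i + j + 1 = r \<Longrightarrow>
      C * A ^\<^sub>m i * (dop A ^^ j) (\<lambda>s. B * L s) t = (-1) ^ j \<cdot>\<^sub>m (C * A ^\<^sub>m (r - 1) * B * L t)"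
    using C_pow_mult_dop_iter_antidiag[OF A C BL vanish'] assoc by simp
qed

lemma calC_mult_calB_blocks:
  assumes "1 \<le> i" "i \<le> r" "1 \<le> j" "j \<le> r" and a: "a < p" and b: "b < m"
  shows "i + j \<le> r \<Longrightarrow> (calC A C r * calB A B L r t) $$ ((i - 1) * p + a, (j - 1) * m + b) = 0"
    and "i + j = r + 1 \<Longrightarrow> (calC A C r * calB A B L r t) $$ ((i - 1) * p + a, (j - 1) * m + b) =
      (-1) ^ (j - 1) * (C * A ^\<^sub>m (r - 1) * B * L t) $$ (a, b)"
proof -
  have "i - 1 < r" "j - 1 < r" using assms by auto
  note index = calC_mult_calB_index[OF A B C L_carrier this(1) a this(2) b]
  show "i + j \<le> r \<Longrightarrow> (calC A C r * calB A B L r t) $$ ((i - 1) * p + a, (j - 1) * m + b) = 0"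
    using index C_pow_mult_dop_iter_input(1)[of "i - 1" "j - 1"] assms by simp
  show "i + j = r + 1 \<Longrightarrow> (calC A C r * calB A B L r t) $$ ((i - 1) * p + a, (j - 1) * m + b) =
      (-1) ^ (j - 1) * (C * A ^\<^sub>m (r - 1) * B * L t) $$ (a, b)"
    using index C_pow_mult_dop_iter_input(2)[of "i - 1" "j - 1"] carrier_matD[OF Gamma_carrier] assms
    by simp
qed

lemma mat_image_calC_mult_calB: "mat_image (calC A C r * calB A B L r t) = carrier_vec (r * p)"
proof (rule block_anti_triangular.mat_image_eq, unfold_locales)
  define G where "G i j = C * A ^\<^sub>m i * (dop A ^^ j) (\<lambda>s. B * L s) t" for i j
  show "calC A C r * calB A B L r t \<in> carrier_mat (r * p) (r * m)"
    by (rule mult_carrier_mat[OF calC_carrier[OF C] calB_carrier[OF B]])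
  show "G i j \<in> carrier_mat p m" for i j
    unfolding G_def using A C B L_carrier by (intro mult_carrier_mat[of _ p n] dop_iter_carrier) auto
  show "(calC A C r * calB A B L r t) $$ (i * p + a, j * m + b) = G i j $$ (a, b)"
    if "i < r" "j < r" "a < p" "b < m" for i j a b
    unfolding G_def using calC_mult_calB_index[OF A B C L_carrier] that by simp
  show "G i j = 0\<^sub>m p m" if "i + j + 1 < r" for i j
    unfolding G_def using C_pow_mult_dop_iter_input(1) that by simp
  show "mat_image (G i j) = carrier_vec p" if "i + j + 1 = r" for i j
    unfolding G_def using C_pow_mult_dop_iter_input(2)[OF that]
      mat_image_smult[OF Gamma_carrier] Gamma_onto by simp
qed


lemma calC_right_inverse:
  shows "calB A B L r t * pinv (calC A C r * calB A B L r t) \<in> carrier_mat n (r * p)"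
    and "calC A C r * (calB A B L r t * pinv (calC A C r * calB A B L r t)) = 1\<^sub>m (r * p)"
proof -
  have CB: "calC A C r * calB A B L r t \<in> carrier_mat (r * p) (r * m)"
    by (rule mult_carrier_mat[OF calC_carrier[OF C] calB_carrier[OF B]])
  obtain R where "R \<in> carrier_mat (r * m) (r * p)" and "calC A C r * calB A B L r t * R = 1\<^sub>m (r * p)"
    using right_inverse_if_mat_image_full[OF CB mat_image_calC_mult_calB] by blast
  then have P: "pinv (calC A C r * calB A B L r t) \<in> carrier_mat (r * m) (r * p)"
    and "calC A C r * calB A B L r t * pinv (calC A C r * calB A B L r t) = 1\<^sub>m (r * p)"
    using pinv_right_inverse[OF CB] by blast+
  then show "calC A C r * (calB A B L r t * pinv (calC A C r * calB A B L r t)) = 1\<^sub>m (r * p)"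
    using assoc_mult_mat[OF calC_carrier[OF C] calB_carrier[OF B] P] by simp
  show "calB A B L r t * pinv (calC A C r * calB A B L r t) \<in> carrier_mat n (r * p)"
    by (rule mult_carrier_mat[OF calB_carrier[OF B] P])
qed
end

section \<open>The coordinate change \<open>U(t)\<close>\<close>

lemma hcat_carrier:
  assumes X: "X \<in> carrier_mat n k" and V: "V \<in> carrier_mat n d"
  shows "hcat X V \<in> carrier_mat n (k + d)"
proof -
  have "four_block_mat X V (0\<^sub>m 0 k) (0\<^sub>m 0 d) \<in> carrier_mat (n + 0) (k + d)"
    using X by (intro four_block_carrier_mat) auto
  then show ?thesis unfolding hcat_def using X V by simp
qed

lemma hcat_mult_vec:
  assumes X: "X \<in> carrier_mat n k" and V: "V \<in> carrier_mat n d"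
    and a: "a \<in> carrier_vec k" and b: "b \<in> carrier_vec d"
  shows "hcat X V *\<^sub>v (a @\<^sub>v b) = X *\<^sub>v a + V *\<^sub>v b"
proof (rule eq_vecI)
  fix i assume "i < dim_vec (X *\<^sub>v a + V *\<^sub>v b)"
  then have i: "i < n" using V by simp
  have "row (hcat X V) i = row X i @\<^sub>v row V i"
    unfolding hcat_def using X V i by (intro row_four_block_mat(1)) auto
  then have "(hcat X V *\<^sub>v (a @\<^sub>v b)) $ i = (row X i @\<^sub>v row V i) \<bullet> (a @\<^sub>v b)"
    using hcat_carrier[OF X V] i by simp
  also have "\<dots> = row X i \<bullet> a + row V i \<bullet> b"
    by (rule scalar_prod_append) (use X V a b in auto)
  finally show "(hcat X V *\<^sub>v (a @\<^sub>v b)) $ i = (X *\<^sub>v a + V *\<^sub>v b) $ i"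
    using X V i by simp
qed (use X V hcat_carrier[OF X V] in auto)

lemma mult_eq_0_if_mat_image_subset_kernel:
  fixes C V :: "real mat"
  assumes C: "C \<in> carrier_mat k n" and V: "V \<in> carrier_mat n d"
    and im: "mat_image V \<subseteq> mat_kernel C"
  shows "C * V = 0\<^sub>m k d"
proof (rule eq_matI)
  fix i j assume i: "i < dim_row (0\<^sub>m k d)" and j: "j < dim_col (0\<^sub>m k d)"
  have "col V j = V *\<^sub>v unit_vec d j"
    using V j by (intro eq_vecI) auto
  then have "col V j \<in> mat_kernel C" using im mat_imageI[OF V, of "unit_vec d j"] j by auto
  then have "C *\<^sub>v col V j = 0\<^sub>v k" using mat_kernelD(2)[OF C] by blast
  then have "(C *\<^sub>v col V j) $ i = 0" using i by simp
  then have "row C i \<bullet> col V j = 0" using C i by simp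
  then show "(C * V) $$ (i, j) = 0\<^sub>m k d $$ (i, j)" using C V i j by simp
qed (use C V in auto)

lemma append_rows_mult_hcat:
  assumes C: "C \<in> carrier_mat k n" and N: "N \<in> carrier_mat d n"
    and X: "X \<in> carrier_mat n k'" and V: "V \<in> carrier_mat n d'"
  shows "(C @\<^sub>r N) * hcat X V = four_block_mat (C * X) (C * V) (N * X) (N * V)"
proof -
  have "(C @\<^sub>r N) * hcat X V =
      four_block_mat C (0\<^sub>m k 0) N (0\<^sub>m d 0) * four_block_mat X V (0\<^sub>m 0 k') (0\<^sub>m 0 d')"
    unfolding append_rows_def hcat_def using C N X V by simp
  also have "\<dots> = four_block_mat (C * X) (C * V) (N * X) (N * V)"
    using C N X V by (subst mult_four_block_mat) auto
  finally show ?thesis .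
qed

lemma mat_image_full_if_right_inverse:
  fixes M R :: "real mat"
  assumes M: "M \<in> carrier_mat k l" and R: "R \<in> carrier_mat l k" and MR: "M * R = 1\<^sub>m k"
  shows "mat_image M = carrier_vec k"
proof -
  have "y \<in> mat_image M" if y: "y \<in> carrier_vec k" for y
    using mat_imageI[OF M, of "R *\<^sub>v y"] R y MR assoc_mult_mat_vec[OF M R y] by simp
  then show ?thesis using mat_image_subset[OF M] by blast
qed

lemma mat_image_hcat_full:
  fixes C X V :: "real mat"
  assumes C: "C \<in> carrier_mat k n" and X: "X \<in> carrier_mat n k" and CX: "C * X = 1\<^sub>m k"
    and V: "V \<in> carrier_mat n (n - k)" and im: "mat_image V = mat_kernel C" and kn: "k \<le> n"
  shows "mat_image (hcat X V) = carrier_vec n"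
proof -
  have W: "hcat X V \<in> carrier_mat n n" using hcat_carrier[OF X V] kn by simp
  have "z \<in> mat_image (hcat X V)" if z: "z \<in> carrier_vec n" for z
  proof -
    define u where "u = z - X *\<^sub>v (C *\<^sub>v z)"
    have Cz: "C *\<^sub>v z \<in> carrier_vec k" using C z by simp
    have u: "u \<in> carrier_vec n" unfolding u_def using X Cz z by simp
    have "C *\<^sub>v u = C *\<^sub>v z - (C * X) *\<^sub>v (C *\<^sub>v z)"
      unfolding u_def using C X Cz z by (simp add: mult_minus_distrib_mat_vec)
    then have "C *\<^sub>v u = 0\<^sub>v k" using CX Cz by simp
    then have "u \<in> mat_image V" using im mat_kernelI[OF C u] by simp
    then obtain b where b: "b \<in> carrier_vec (n - k)" and Vb: "V *\<^sub>v b = u"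
      by (rule mat_imageE[OF V])
    have "hcat X V *\<^sub>v ((C *\<^sub>v z) @\<^sub>v b) = z"
      unfolding hcat_mult_vec[OF X V Cz b] Vb u_def using X Cz z by (intro eq_vecI) auto
    moreover have "(C *\<^sub>v z) @\<^sub>v b \<in> carrier_vec n" using append_carrier_vec[OF Cz b] kn by simp
    ultimately show ?thesis using mat_imageI[OF W] by metis
  qed
  then show ?thesis using mat_image_subset[OF W] by blast
qed

text \<open>\<open>V\<close> is injective because \<open>[X, V]\<close> is square and onto; this replaces the rank--nullity
  argument \<open>dim ker C = n - k\<close>.\<close>

lemma mult_vec_inj_if_mat_image_eq_kernel:
  fixes C X V :: "real mat"
  assumes C: "C \<in> carrier_mat k n" and X: "X \<in> carrier_mat n k" and CX: "C * X = 1\<^sub>m k"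
    and V: "V \<in> carrier_mat n (n - k)" and im: "mat_image V = mat_kernel C" and kn: "k \<le> n"
    and v: "v \<in> carrier_vec (n - k)" and Vv: "V *\<^sub>v v = 0\<^sub>v n"
  shows "v = 0\<^sub>v (n - k)"
proof -
  have W: "hcat X V \<in> carrier_mat n n" using hcat_carrier[OF X V] kn by simp
  obtain Q where Q: "Q \<in> carrier_mat n n" and WQ: "hcat X V * Q = 1\<^sub>m n"
    using right_inverse_if_mat_image_full[OF W mat_image_hcat_full[OF C X CX V im kn]] by blast
  have "det (hcat X V) \<noteq> 0" using det_mult[OF W Q] WQ by auto
  moreover have "hcat X V *\<^sub>v (0\<^sub>v k @\<^sub>v v) = 0\<^sub>v n"
    unfolding hcat_mult_vec[OF X V zero_carrier_vec v] Vv using X by (intro eq_vecI) auto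
  moreover have "0\<^sub>v k @\<^sub>v v \<in> carrier_vec n" using append_carrier_vec[OF zero_carrier_vec[of k] v] kn by simp
  ultimately have zero: "0\<^sub>v k @\<^sub>v v = 0\<^sub>v n" using det_0_iff_vec_prod_zero_field[OF W] by blast
  have "v $ i = 0" if "i < n - k" for i
  proof -
    have "v $ i = (0\<^sub>v k @\<^sub>v v) $ (k + i)" using v that by simp
    also have "\<dots> = 0" using zero that kn by simp
    finally show ?thesis .
  qed
  then show ?thesis using v by (intro eq_vecI) auto
qed

lemma coordinate_change_inverse:
  fixes C X V :: "real mat"
  assumes C: "C \<in> carrier_mat k n" and X: "X \<in> carrier_mat n k" and CX: "C * X = 1\<^sub>m k"
    and V: "V \<in> carrier_mat n (n - k)" and im: "mat_image V = mat_kernel C"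
  defines "N \<equiv> pinv V * (1\<^sub>m n - X * C)"
  shows "C @\<^sub>r N \<in> carrier_mat n n" and "(C @\<^sub>r N) * hcat X V = 1\<^sub>m n"
    and "hcat X V * (C @\<^sub>r N) = 1\<^sub>m n"
proof -
  define d where "d = n - k"
  have kn: "k \<le> n"
    by (rule dim_row_le_dim_col_if_mat_image_full[OF C mat_image_full_if_right_inverse[OF C X CX]])
  then have nkd: "n = k + d" unfolding d_def by simp
  have V': "V \<in> carrier_mat n d" using V unfolding d_def .
  have CV: "C * V = 0\<^sub>m k d"
    using mult_eq_0_if_mat_image_subset_kernel[OF C V'] im by simp
  obtain PV: "pinv V \<in> carrier_mat d n" and PVV: "pinv V * V = 1\<^sub>m d"
    using pinv_left_inverse[OF V mult_vec_inj_if_mat_image_eq_kernel[OF C X CX V im kn]]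
    unfolding d_def by blast
  have XC: "X * C \<in> carrier_mat n n" using X C by simp
  have IXC: "1\<^sub>m n - X * C \<in> carrier_mat n n" by (rule minus_carrier_mat[OF XC])
  have N: "N \<in> carrier_mat d n" unfolding N_def using PV IXC by simp
  have "(1\<^sub>m n - X * C) * X = X - X * (C * X)"
    using minus_mult_distrib_mat[of "1\<^sub>m n" n n "X * C" X k] assoc_mult_mat[OF X C X] X XC by simp
  also have "\<dots> = 0\<^sub>m n k" using CX X by (intro eq_matI) auto
  finally have NX: "N * X = 0\<^sub>m d k" unfolding N_def using assoc_mult_mat[OF PV IXC X] PV by simp
  have "(1\<^sub>m n - X * C) * V = V - X * (C * V)"
    using minus_mult_distrib_mat[of "1\<^sub>m n" n n "X * C" V d] assoc_mult_mat[OF X C V'] V' XC by simp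
  also have "\<dots> = V" using CV X V' by (intro eq_matI) auto
  finally have NV: "N * V = 1\<^sub>m d" unfolding N_def using assoc_mult_mat[OF PV IXC V'] PVV by simp
  show U: "C @\<^sub>r N \<in> carrier_mat n n" using carrier_append_rows[OF C N] nkd by simp
  have "(C @\<^sub>r N) * hcat X V = four_block_mat (1\<^sub>m k) (0\<^sub>m k d) (0\<^sub>m d k) (1\<^sub>m d)"
    unfolding append_rows_mult_hcat[OF C N X V'] CX CV NX NV ..
  then show UW: "(C @\<^sub>r N) * hcat X V = 1\<^sub>m n" using nkd by simp
  have "hcat X V \<in> carrier_mat n n" using hcat_carrier[OF X V'] nkd by simp
  then show "hcat X V * (C @\<^sub>r N) = 1\<^sub>m n" by (rule mat_mult_left_right_inverse[OF U _ UW])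
qed

theorem lemma1:
  fixes n m p q r :: nat
    and A B C :: "real mat"
    and f :: "real \<Rightarrow> real vec \<Rightarrow> real vec \<Rightarrow> real vec"
    and L :: "real \<Rightarrow> real mat"
    and V :: "real mat"
  assumes "m \<ge> p"
    and A: "A \<in> carrier_mat n n" and B: "B \<in> carrier_mat n m" and C: "C \<in> carrier_mat p n"
    and f_dim: "\<And>t x u. x \<in> carrier_vec n \<Longrightarrow> u \<in> carrier_vec m \<Longrightarrow> f t x u \<in> carrier_vec n"
    and f_cont: "\<And>t x u \<epsilon>. x \<in> carrier_vec n \<Longrightarrow> u \<in> carrier_vec m \<Longrightarrow> \<epsilon> > 0 \<Longrightarrow>
        \<exists>\<delta>>0. \<forall>t' x' u'. x' \<in> carrier_vec n \<longrightarrow> u' \<in> carrier_vec m \<longrightarrow>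
          \<bar>t' - t\<bar> < \<delta> \<longrightarrow> vnorm (x' - x) < \<delta> \<longrightarrow> vnorm (u' - u) < \<delta> \<longrightarrow>
          vnorm (f t' x' u' - f t x u) < \<epsilon>"
    and f_bdd: "\<exists>M. \<forall>t x u. x \<in> carrier_vec n \<longrightarrow> u \<in> carrier_vec m \<longrightarrow> vnorm (f t x u) \<le> M"
    and L_dim: "\<And>t. L t \<in> carrier_mat m m"
    and L_smooth: "\<And>i j k t. i < m \<Longrightarrow> j < m \<Longrightarrow>
        ((Derivative.deriv ^^ k) (\<lambda>s. L s $$ (i,j))) differentiable (at t)"
    and L_bdd: "\<And>k. k \<le> n \<Longrightarrow> \<exists>M. \<forall>t i j. i < m \<longrightarrow> j < m \<longrightarrow>
        \<bar>(Derivative.deriv ^^ k) (\<lambda>s. L s $$ (i,j)) t\<bar> \<le> M"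
    and rk_BL: "\<And>t. rk (B * L t) = q" and "q \<ge> p"
    and P2_BL: "\<And>k t. k + 2 \<le> r \<Longrightarrow> C * (A ^\<^sub>m k) * B * L t = 0\<^sub>m p m"
    and P2_f: "\<And>k t x u. k + 2 \<le> r \<Longrightarrow> x \<in> carrier_vec n \<Longrightarrow> u \<in> carrier_vec m \<Longrightarrow>
        C * (A ^\<^sub>m k) *\<^sub>v f t x u = 0\<^sub>v p"
    and rk_Gamma: "\<And>t. rk (C * (A ^\<^sub>m (r - 1)) * B * L t) = p"
    and V: "V \<in> carrier_mat n (n - rk (calC A C r))"
    and V_im: "mat_image V = mat_kernel (calC A C r)"
  shows "\<forall>t::real.
      rk (calC A C r) = p * r \<and>
      rk (calC A C r * calB A B L r t) = p * r \<and>
      (\<forall>i j a b. 1 \<le> i \<longrightarrow> i \<le> r \<longrightarrow> 1 \<le> j \<longrightarrow> j \<le> r \<longrightarrow> a < p \<longrightarrow> b < m \<longrightarrow>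
          (i + j \<le> r \<longrightarrow> (calC A C r * calB A B L r t) $$ ((i - 1) * p + a, (j - 1) * m + b) = 0) \<and>
          (i + j = r + 1 \<longrightarrow> (calC A C r * calB A B L r t) $$ ((i - 1) * p + a, (j - 1) * m + b)
              = (-1) ^ (j - 1) * (C * (A ^\<^sub>m (r - 1)) * B * L t) $$ (a, b))) \<and>
      calU A B C L r V t \<in> carrier_mat n n \<and>
      invertible_mat (calU A B C L r V t) \<and>
      calU A B C L r V t * hcat (calB A B L r t * pinv (calC A C r * calB A B L r t)) V = 1\<^sub>m n \<and>
      hcat (calB A B L r t * pinv (calC A C r * calB A B L r t)) V * calU A B C L r V t = 1\<^sub>m n"
proof -
  have L: "smooth_mat m m L" using L_dim L_smooth unfolding smooth_mat_def smooth_def by blast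
  have "mat_image (C * A ^\<^sub>m (r - 1) * B * L t) = carrier_vec p" for t
    using rk_eq_dim_row_iff rk_Gamma A B C L_dim by (meson mult_carrier_mat pow_carrier_mat)
  then interpret relative_degree_system n m p r A B C L
    using A B C L P2_BL by unfold_locales
  let ?C = "calC A C r" and ?B = "\<lambda>t. calB A B L r t"
  have rk_C: "rk ?C = r * p"
    using mat_image_full_if_mult[OF calC_carrier[OF C] calB_carrier[OF B] mat_image_calC_mult_calB]
      rk_eq_dim_row_iff[OF calC_carrier[OF C]] by simp
  have rk_CB: "rk (?C * ?B t) = r * p" for t
    using rk_eq_dim_row_iff[OF mult_carrier_mat[OF calC_carrier[OF C] calB_carrier[OF B]]]
      mat_image_calC_mult_calB by simp
  note U = coordinate_change_inverse[OF calC_carrier[OF C] calC_right_inverse V[unfolded rk_C] V_im,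
      folded calN_def[of A, unfolded carrier_matD(1)[OF A]] calU_def]
  have "invertible_mat (calU A B C L r V t)" for t
    unfolding invertible_mat_def inverts_mat_def
    using U by (metis carrier_matD index_mult_mat(2) index_one_mat(2) square_mat.simps)
  then show ?thesis
    using rk_C rk_CB U calC_mult_calB_blocks by (simp add: mult.commute)
qed

end
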